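(* Let $G:[0,\nu)\to[0,\infty)$ be increasing with $G(0)=0$ and range $[0,\infty)$, and suppose that for every $c>0$ the function $x\mapsto G^{-1}(G(x)+G(c))$ is concave on $[0,\nu)$. Let $f$ be convex on $[0,\infty)$ with $f(1)=0$ and $\mathsf{D_m}(f)\le\nu$. Assume that $G(D_f(q_Yq_Z\|r_Yr_Z))\le G(D_f(q_Y\|r_Y))+G(D_f(q_Z\|r_Z))$ holds for all distributions $q_Y\ll r_Y$ on $\mathcal{Y}$ and $q_Z\ll r_Z$ on $\mathcal{Z}$ whenever $|\mathcal{Y}|=|\mathcal{Z}|=2$. Then this inequality holds for all distributions $q_Y\ll r_Y$, $q_Z\ll r_Z$ on finite alphabets $\mathcal{Y},\mathcal{Z}$ of arbitrary size.
   Context: For distributions $p\ll q$ on a finite set, $D_f(p\|q)=\sum_x q(x) f(p(x)/q(x))$ with $0f(0/0)=0$; $\mathsf{D_m}(f)=f(0)+\lim_{t\to\infty}f(t)/t$. *)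

theory Defs
  imports "HOL-Analysis.Analysis" "HOL-Library.Extended_Real"
begin

definition is_dist :: "('a::finite \<Rightarrow> real) \<Rightarrow> bool" where
  "is_dist p \<longleftrightarrow> (\<forall>x. 0 \<le> p x) \<and> sum p UNIV = 1"

definition abs_cont :: "('a::finite \<Rightarrow> real) \<Rightarrow> ('a \<Rightarrow> real) \<Rightarrow> bool" where
  "abs_cont p q \<longleftrightarrow> (\<forall>x. q x = 0 \<longrightarrow> p x = 0)"

text \<open>f-divergence, with the convention 0 f(0/0) = 0 (only used for p << q).\<close>
definition fdiv :: "(real \<Rightarrow> real) \<Rightarrow> ('a::finite \<Rightarrow> real) \<Rightarrow> ('a \<Rightarrow> real) \<Rightarrow> real" where
  "fdiv f p q = (\<Sum>x\<in>UNIV. if q x = 0 then 0 else q x * f (p x / q x))"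

definition prod_dist :: "('a \<Rightarrow> real) \<Rightarrow> ('b \<Rightarrow> real) \<Rightarrow> ('a \<times> 'b \<Rightarrow> real)" where
  "prod_dist p q = (\<lambda>(y, z). p y * q z)"

definition Dm :: "(real \<Rightarrow> real) \<Rightarrow> ereal" where
  "Dm f = ereal (f 0) + Lim at_top (\<lambda>t. ereal (f t / t))"

end

(*
  Fix the pair (q_Z, r_Z), let c be its divergence and H x = G^-1 (G x + G c), which is concave
  (the identity if c = 0).  With phi u = sum_z r_Z z f (u q_Z z / r_Z z), the divergence of the
  product pair is the r_Y-mean of phi (T), and D_f (q_Y || r_Y) the r_Y-mean of f (T), where
  T = q_Y / r_Y is the likelihood ratio; T has mean 1.  Every distribution of T with mean 1 is a
  mixture of two-point distributions with mean 1 (pair each atom below 1 with each atom above 1),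
  and these are exactly the likelihood-ratio laws of binary pairs.  So the binary hypothesis gives
  mean phi <= H (mean f) on each two-point component, and Jensen's inequality for the concave H
  carries it over to the mixture.  Applying G, and then swapping the roles of Y and Z, removes the
  binary restriction on both factors.  All divergences stay in the domain [0, nu) of G because
  f (t) <= f 0 + s t for the asymptotic slope s of f, strictly unless f is affine (and then
  every divergence vanishes).
*)
theory Submission
  imports Defs
begin

lemma fdiv_eq_sum_support:
  "fdiv g p q = (\<Sum>x | q x \<noteq> 0. q x * g (p x / q x))"
  unfolding fdiv_def by (simp add: sum.If_cases Collect_neg_eq[symmetric])

lemma is_dist_sum_support:
  assumes "is_dist p" "is_dist q" "abs_cont p q"
  shows "(\<Sum>x | q x \<noteq> 0. q x) = 1" "(\<Sum>x | q x \<noteq> 0. p x) = 1"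
proof -
  have "(\<Sum>x | q x \<noteq> 0. h x) = sum h UNIV" if "\<And>x. q x = 0 \<Longrightarrow> h x = 0" for h :: "'a \<Rightarrow> real"
    by (rule sum.mono_neutral_left) (use that in auto)
  then show "(\<Sum>x | q x \<noteq> 0. q x) = 1" "(\<Sum>x | q x \<noteq> 0. p x) = 1"
    using assms by (auto simp: is_dist_def abs_cont_def)
qed

lemma is_dist_prod_dist:
  assumes "is_dist p" "is_dist q"
  shows "is_dist (prod_dist p q)"
proof -
  have "sum (prod_dist p q) UNIV = sum p UNIV * sum q UNIV"
    unfolding prod_dist_def UNIV_Times_UNIV[symmetric] sum.cartesian_product'
    by (simp add: split_beta sum_product)
  then show ?thesis
    using assms unfolding is_dist_def prod_dist_def by auto
qed

lemma abs_cont_prod_dist: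
  "abs_cont p r \<Longrightarrow> abs_cont q s \<Longrightarrow> abs_cont (prod_dist p q) (prod_dist r s)"
  unfolding abs_cont_def prod_dist_def by auto

lemma fdiv_prod_dist:
  "fdiv f (prod_dist p q) (prod_dist r s) = fdiv (\<lambda>u. fdiv (\<lambda>v. f (u * v)) q s) p r"
proof -
  have "fdiv f (prod_dist p q) (prod_dist r s) = (\<Sum>y\<in>UNIV. \<Sum>z\<in>UNIV.
      if r y * s z = 0 then 0 else r y * s z * f (p y * q z / (r y * s z)))"
    unfolding fdiv_def prod_dist_def UNIV_Times_UNIV[symmetric] sum.cartesian_product' by (simp only: prod.case)
  also have "\<dots> = (\<Sum>y\<in>UNIV. if r y = 0 then 0
      else r y * (\<Sum>z\<in>UNIV. if s z = 0 then 0 else s z * f (p y / r y * (q z / s z))))"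
    by (auto simp: sum_distrib_left intro!: sum.cong)
  finally show ?thesis
    unfolding fdiv_def .
qed

lemma fdiv_prod_dist_commute:
  "fdiv f (prod_dist p q) (prod_dist r s) = fdiv f (prod_dist q p) (prod_dist s r)"
  unfolding fdiv_def prod_dist_def
  by (rule sum.reindex_bij_witness[of _ prod.swap prod.swap]) (auto simp: mult.commute)

lemma fdiv_nonneg:
  assumes "convex_on {0..} f" "f 1 = 0" "is_dist p" "is_dist q" "abs_cont p q"
  shows "0 \<le> fdiv f p q"
proof -
  let ?S = "{x. q x \<noteq> 0}"
  note sums = is_dist_sum_support[OF assms(3-5)]
  have "?S \<noteq> {}"
    using sums(1) by force
  then have "f (\<Sum>x\<in>?S. q x *\<^sub>R (p x / q x)) \<le> (\<Sum>x\<in>?S. q x * f (p x / q x))"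
    by (intro convex_on_sum[OF _ _ assms(1) sums(1)]) (use assms(3,4) in \<open>auto simp: is_dist_def\<close>)
  also have "(\<Sum>x\<in>?S. q x *\<^sub>R (p x / q x)) = 1"
    using sums(2) by simp
  finally show ?thesis
    using assms(2) by (simp add: fdiv_eq_sum_support)
qed

definition asymptotic_slope :: "(real \<Rightarrow> real) \<Rightarrow> ereal" where
  "asymptotic_slope f = (SUP t\<in>{0<..}. ereal ((f t - f 0) / t))"

lemma slope_le_asymptotic_slope: "0 < t \<Longrightarrow> ereal ((f t - f 0) / t) \<le> asymptotic_slope f"
  unfolding asymptotic_slope_def by (rule SUP_upper) simp

lemma asymptotic_slope_not_MInf: "asymptotic_slope f \<noteq> -\<infinity>"
  using slope_le_asymptotic_slope[of 1 f] by auto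

lemma convex_on_nonpos_vanishes:
  fixes g :: "'a::real_vector \<Rightarrow> real"
  assumes "convex_on I g" "\<And>x. x \<in> I \<Longrightarrow> g x \<le> 0" "x \<in> I" "y \<in> I" "0 < u" "u < 1"
    and "g ((1 - u) *\<^sub>R x + u *\<^sub>R y) = 0"
  shows "g x = 0"
proof -
  have "0 \<le> (1 - u) * g x + u * g y"
    using convex_onD[OF assms(1), of u x y] assms(3-7) by simp
  moreover have "u * g y \<le> 0"
    using assms(2,4,5) by (simp add: mult_nonneg_nonpos)
  ultimately have "0 \<le> (1 - u) * g x"
    by linarith
  then show ?thesis
    using assms(2,3,6) by (simp add: zero_le_mult_iff order_antisym)
qed

context
  fixes f :: "real \<Rightarrow> real"
  assumes f_convex: "convex_on {0..} f"
begin

lemma slope_from_0_mono: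
  assumes "0 < u" "u \<le> v"
  shows "(f u - f 0) / u \<le> (f v - f 0) / v"
proof (cases "u = v")
  case False
  then show ?thesis
    using convex_on_slope_le(1)[OF f_convex, of 0 v u] assms by (simp add: field_simps)
qed simp

lemma slope_tendsto_asymptotic_slope:
  "((\<lambda>t. ereal ((f t - f 0) / t)) \<longlongrightarrow> asymptotic_slope f) at_top"
proof (rule order_tendstoI)
  fix a assume "a < asymptotic_slope f"
  then obtain t0 where t0: "0 < t0" "a < ereal ((f t0 - f 0) / t0)"
    unfolding asymptotic_slope_def less_SUP_iff by auto
  show "\<forall>\<^sub>F t in at_top. a < ereal ((f t - f 0) / t)"
    using eventually_ge_at_top[of t0]
  proof eventually_elim
    case (elim t)
    then show ?case
      using slope_from_0_mono[of t0 t] t0 by (simp add: less_le_trans)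
  qed
next
  fix b assume "asymptotic_slope f < b"
  show "\<forall>\<^sub>F t in at_top. ereal ((f t - f 0) / t) < b"
    using eventually_gt_at_top[of 0]
  proof eventually_elim
    case (elim t)
    show ?case
      using slope_le_asymptotic_slope[OF elim] \<open>asymptotic_slope f < b\<close> by (rule le_less_trans)
  qed
qed

lemma Dm_eq_asymptotic_slope: "Dm f = ereal (f 0) + asymptotic_slope f"
proof -
  have "((\<lambda>t. f 0 / t) \<longlongrightarrow> 0) at_top"
    by (intro tendsto_divide_0[OF tendsto_const] filterlim_at_top_imp_at_infinity filterlim_ident)
  then have "((\<lambda>t. ereal (f 0 / t)) \<longlongrightarrow> 0) at_top"
    unfolding zero_ereal_def by (rule tendsto_ereal)
  then have "((\<lambda>t. ereal ((f t - f 0) / t) + ereal (f 0 / t)) \<longlongrightarrow> asymptotic_slope f + 0) at_top"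
    by (intro tendsto_add_ereal_general1 slope_tendsto_asymptotic_slope) simp_all
  then have lim: "((\<lambda>t. ereal ((f t - f 0) / t) + ereal (f 0 / t)) \<longlongrightarrow> asymptotic_slope f) at_top"
    by (simp only: add_0_right)
  have "\<forall>\<^sub>F t in at_top. ereal ((f t - f 0) / t) + ereal (f 0 / t) = ereal (f t / t)"
    using eventually_gt_at_top[of 0] by eventually_elim (simp add: diff_divide_distrib)
  then have "((\<lambda>t. ereal (f t / t)) \<longlongrightarrow> asymptotic_slope f) at_top"
    using lim by (rule tendsto_cong[THEN iffD1])
  then show ?thesis
    unfolding Dm_def by (simp add: tendsto_Lim)
qed

lemma below_asymptotic_line:
  assumes "asymptotic_slope f = ereal L" "0 \<le> t"
  shows "f t \<le> f 0 + L * t"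
proof (cases "t = 0")
  case False
  then have "(f t - f 0) / t \<le> L"
    using slope_le_asymptotic_slope[of t f] assms by simp
  then show ?thesis
    using False assms(2) by (simp add: divide_le_eq algebra_simps)
qed simp

text \<open>A convex function touching its asymptotic line at one point coincides with it.\<close>
lemma strictly_below_asymptotic_line:
  assumes L: "asymptotic_slope f = ereal L" and "f 1 < f 0 + L" "0 < t"
  shows "f t < f 0 + L * t"
proof (rule ccontr)
  define g where "g t = f t - (f 0 + L * t)" for t
  have "concave_on {0..} (\<lambda>t. f 0 + L * t)"
    unfolding concave_on_iff by (auto simp: algebra_simps simp flip: distrib_right)
  then have g_convex: "convex_on {0..} g"
    unfolding g_def by (intro convex_on_diff f_convex)
  have g_nonpos: "g t \<le> 0" if "t \<in> {0..}" for t
    using below_asymptotic_line[OF L] that by (simp add: g_def)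
  assume "\<not> f t < f 0 + L * t"
  then have "g t = 0"
    using g_nonpos[of t] \<open>0 < t\<close> by (simp add: g_def)
  have "g 1 = 0"
  proof (cases t "1::real" rule: linorder_cases)
    case less
    have "(1 - (1 - t)) *\<^sub>R 1 + (1 - t) *\<^sub>R 0 = t"
      by simp
    then show ?thesis
      using \<open>g t = 0\<close> less \<open>0 < t\<close>
      by (intro convex_on_nonpos_vanishes[OF g_convex g_nonpos, of 1 0 "1 - t"]) auto
  next
    case greater
    have "(1 - 1/2) *\<^sub>R 1 + (1/2) *\<^sub>R (2 * t - 1) = t"
      by (simp add: field_simps)
    then show ?thesis
      using \<open>g t = 0\<close> greater
      by (intro convex_on_nonpos_vanishes[OF g_convex g_nonpos, of 1 "2 * t - 1" "1/2"]) auto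
  qed (use \<open>g t = 0\<close> in simp)
  then show False
    using assms(2) by (simp add: g_def)
qed

end

lemma fdiv_affine_majorant:
  fixes p q :: "'a::finite \<Rightarrow> real"
  assumes dists: "is_dist p" "is_dist q" "abs_cont p q"
    and le: "\<And>t. 0 \<le> t \<Longrightarrow> g t \<le> a + b * t"
  shows "fdiv g p q \<le> a + b"
    and "(\<And>t. 0 < t \<Longrightarrow> g t < a + b * t) \<Longrightarrow> fdiv g p q < a + b"
proof -
  let ?S = "{x. q x \<noteq> 0}"
  have q_pos: "0 < q x" if "x \<in> ?S" for x
    using dists(2) that by (auto simp: is_dist_def order_less_le)
  have ratio_nonneg: "0 \<le> p x / q x" for x
    using dists(1,2) by (simp add: is_dist_def)
  have "a + b = (\<Sum>x\<in>?S. q x * (a + b * (p x / q x)))"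
    using is_dist_sum_support[OF dists] q_pos
    by (simp add: algebra_simps sum.distrib flip: sum_distrib_left)
  note majorant_sum = fdiv_eq_sum_support[of g p q] this
  have term_le: "q x * g (p x / q x) \<le> q x * (a + b * (p x / q x))" if "x \<in> ?S" for x
    using le[OF ratio_nonneg] q_pos[OF that] by simp
  show "fdiv g p q \<le> a + b"
    unfolding majorant_sum by (rule sum_mono) (rule term_le)
  assume less: "\<And>t. 0 < t \<Longrightarrow> g t < a + b * t"
  obtain x where "p x \<noteq> 0"
    using dists(1) by (force simp: is_dist_def)
  then have x: "x \<in> ?S" "0 < p x / q x"
    using dists ratio_nonneg[of x] by (auto simp: abs_cont_def order_less_le)
  then have "q x * g (p x / q x) < q x * (a + b * (p x / q x))"
    using less[OF x(2)] q_pos[OF x(1)] by simp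
  then show "fdiv g p q < a + b"
    unfolding majorant_sum by (intro sum_strict_mono_ex1) (use term_le x in auto)
qed

lemma fdiv_less_if_Dm_le:
  fixes p q :: "'a::finite \<Rightarrow> real"
  assumes f_convex: "convex_on {0..} f" and "f 1 = 0" "Dm f \<le> \<nu>" "0 < \<nu>"
    and dists: "is_dist p" "is_dist q" "abs_cont p q"
  shows "ereal (fdiv f p q) < \<nu>"
proof (cases "asymptotic_slope f")
  case (real L)
  note line = below_asymptotic_line[OF f_convex real]
  have Dm: "Dm f = ereal (f 0 + L)"
    using Dm_eq_asymptotic_slope[OF f_convex] real by simp
  show ?thesis
  proof (cases "f 0 + L \<le> 0")
    case True
    then have "ereal (fdiv f p q) \<le> 0"
      using fdiv_affine_majorant(1)[OF dists line] by (simp add: zero_ereal_def)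
    then show ?thesis
      using \<open>0 < \<nu>\<close> by (rule le_less_trans)
  next
    case False
    then have "f 1 < f 0 + L"
      using \<open>f 1 = 0\<close> by simp
    then have "ereal (fdiv f p q) < Dm f"
      using fdiv_affine_majorant(2)[OF dists line strictly_below_asymptotic_line[OF f_convex real]]
      by (simp add: Dm)
    then show ?thesis
      using \<open>Dm f \<le> \<nu>\<close> by (rule less_le_trans)
  qed
next
  case PInf
  then show ?thesis
    using Dm_eq_asymptotic_slope[OF f_convex] \<open>Dm f \<le> \<nu>\<close> by simp
qed (simp add: asymptotic_slope_not_MInf)

text \<open>The mean of \<open>g\<close> under the distribution on \<open>{a, b}\<close> with mean 1.\<close>
definition two_point_avg :: "real \<Rightarrow> real \<Rightarrow> (real \<Rightarrow> real) \<Rightarrow> real" where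
  "two_point_avg a b g = ((b - 1) * g a + (1 - a) * g b) / (b - a)"

lemma two_point_avg_as_fdiv:
  assumes "0 \<le> a" "a < 1" "1 \<le> b"
  obtains p q :: "bool \<Rightarrow> real"
  where "is_dist p" "is_dist q" "abs_cont p q" "\<And>g. fdiv g p q = two_point_avg a b g"
proof -
  define q where "q x = (if x then (b - 1) / (b - a) else (1 - a) / (b - a))" for x
  define p where "p x = (if x then a else b) * q x" for x
  have "b - a > 0"
    using assms by simp
  have "q True + q False = (b - a) / (b - a)" "a * q True + b * q False = (b - a) / (b - a)"
    unfolding q_def by (simp_all add: add_divide_distrib[symmetric] algebra_simps)
  then have "q True + q False = 1" "a * q True + b * q False = 1"
    using \<open>b - a > 0\<close> by simp_all
  moreover have "0 \<le> q x" for x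
    using assms \<open>b - a > 0\<close> by (simp add: q_def)
  ultimately have "is_dist p" "is_dist q"
    using assms unfolding is_dist_def p_def by (simp_all add: UNIV_bool)
  moreover have "abs_cont p q"
    by (simp add: abs_cont_def p_def)
  moreover have "fdiv g p q = two_point_avg a b g" for g
  proof -
    have "q False \<noteq> 0"
      using assms \<open>b - a > 0\<close> by (simp add: q_def)
    then have "fdiv g p q = q True * g a + q False * g b"
      by (simp add: fdiv_def UNIV_bool p_def)
    also have "\<dots> = two_point_avg a b g"
      by (simp add: q_def two_point_avg_def add_divide_distrib)
    finally show ?thesis .
  qed
  ultimately show ?thesis
    using that by blast
qed

lemma sum_two_point_avg_pairs:
  fixes r t :: "'a \<Rightarrow> real"
  assumes "finite L" "finite U" "\<And>i j. i \<in> L \<Longrightarrow> j \<in> U \<Longrightarrow> t i \<noteq> t j"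
    and "(\<Sum>i\<in>L. r i * (1 - t i)) = E" "(\<Sum>j\<in>U. r j * (t j - 1)) = E" "E \<noteq> 0"
  shows "(\<Sum>(i, j)\<in>L \<times> U. r i * r j * (t j - t i) / E * two_point_avg (t i) (t j) g)
       = (\<Sum>i\<in>L. r i * g (t i)) + (\<Sum>j\<in>U. r j * g (t j))"
proof -
  have "r i * r j * (t j - t i) / E * two_point_avg (t i) (t j) g
      = r i * g (t i) * (r j * (t j - 1)) / E + r j * g (t j) * (r i * (1 - t i)) / E"
    if "i \<in> L" "j \<in> U" for i j
  proof -
    have "r i * r j * (t j - t i) / E * two_point_avg (t i) (t j) g
        = r i * r j / E * ((t j - t i) * two_point_avg (t i) (t j) g)"
      by simp
    also have "\<dots> = r i * r j / E * ((t j - 1) * g (t i) + (1 - t i) * g (t j))"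
      using assms(3)[OF that] by (simp add: two_point_avg_def)
    also have "\<dots> = r i * g (t i) * (r j * (t j - 1)) / E + r j * g (t j) * (r i * (1 - t i)) / E"
      using assms(6) by (simp add: field_simps)
    finally show ?thesis .
  qed
  then have "(\<Sum>(i, j)\<in>L \<times> U. r i * r j * (t j - t i) / E * two_point_avg (t i) (t j) g)
      = (\<Sum>i\<in>L. r i * g (t i) * (\<Sum>j\<in>U. r j * (t j - 1)) / E)
      + (\<Sum>j\<in>U. r j * g (t j) * (\<Sum>i\<in>L. r i * (1 - t i)) / E)"
    unfolding sum.cartesian_product'
    by (simp add: sum.distrib sum_distrib_left sum_divide_distrib sum.swap[of _ U L])
  also have "\<dots> = (\<Sum>i\<in>L. r i * g (t i)) + (\<Sum>j\<in>U. r j * g (t j))"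
    using assms(4-6) by simp
  finally show ?thesis .
qed

lemma mixture_of_two_point_avgs_if_ratio_below_1:
  fixes r t :: "'a \<Rightarrow> real"
  assumes S: "finite S" "\<And>x. x \<in> S \<Longrightarrow> 0 < r x" "\<And>x. x \<in> S \<Longrightarrow> 0 \<le> t x"
    and sums: "sum r S = 1" "(\<Sum>x\<in>S. r x * t x) = 1"
    and below: "x\<^sub>0 \<in> S" "t x\<^sub>0 < 1"
  obtains P :: "('a \<times> 'a) set" and w a b :: "'a \<times> 'a \<Rightarrow> real"
  where "finite P" "P \<noteq> {}" "\<And>k. k \<in> P \<Longrightarrow> 0 \<le> w k" "sum w P = 1"
    "\<And>k. k \<in> P \<Longrightarrow> 0 \<le> a k \<and> a k < 1 \<and> 1 \<le> b k"
    "\<And>g. (\<Sum>x\<in>S. r x * g (t x)) = (\<Sum>k\<in>P. w k * two_point_avg (a k) (b k) g)"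
proof -
  define L where "L = {x\<in>S. t x < 1}"
  define U where "U = {x\<in>S. 1 \<le> t x}"
  define E where "E = (\<Sum>i\<in>L. r i * (1 - t i))"
  define w where "w k = r (fst k) * r (snd k) * (t (snd k) - t (fst k)) / E" for k
  have split: "(\<Sum>x\<in>S. r x * g (t x)) = (\<Sum>i\<in>L. r i * g (t i)) + (\<Sum>j\<in>U. r j * g (t j))" for g
  proof -
    have "S = L \<union> U" "L \<inter> U = {}"
      by (auto simp: L_def U_def)
    then show ?thesis
      using S(1) by (simp add: sum.union_disjoint)
  qed
  have "(\<Sum>x\<in>S. r x * (t x - 1)) = 0"
    using sums by (simp add: right_diff_distrib sum_subtractf)
  then have "(\<Sum>i\<in>L. r i * (t i - 1)) + (\<Sum>j\<in>U. r j * (t j - 1)) = 0"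
    using split[of "\<lambda>s. s - 1"] by simp
  moreover have "E = - (\<Sum>i\<in>L. r i * (t i - 1))"
    by (simp add: E_def algebra_simps flip: sum_negf)
  ultimately have balance: "(\<Sum>j\<in>U. r j * (t j - 1)) = E"
    by linarith
  have "0 < E"
    unfolding E_def using below S(1,2) by (intro sum_pos) (auto simp: L_def)
  then have "L \<noteq> {}" "U \<noteq> {}"
    using balance by (auto simp: E_def)
  have mixture: "(\<Sum>x\<in>S. r x * g (t x)) = (\<Sum>k\<in>L \<times> U. w k * two_point_avg (t (fst k)) (t (snd k)) g)"
    for g
    unfolding split w_def using \<open>0 < E\<close>
    by (subst sum_two_point_avg_pairs[symmetric, OF _ _ _ E_def[symmetric] balance])
      (auto simp: L_def U_def split_beta finite_subset[OF _ S(1)])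
  have "0 \<le> w k" if "k \<in> L \<times> U" for k
    using that \<open>0 < E\<close> S(2)
    by (auto simp: w_def L_def U_def intro!: divide_nonneg_nonneg mult_nonneg_nonneg less_imp_le)
  moreover have "sum w (L \<times> U) = 1"
  proof -
    have "(\<Sum>k\<in>L \<times> U. w k * two_point_avg (t (fst k)) (t (snd k)) (\<lambda>_. 1)) = sum w (L \<times> U)"
      by (rule sum.cong) (auto simp: two_point_avg_def L_def U_def)
    then show ?thesis
      using mixture[of "\<lambda>_. 1"] sums(1) by simp
  qed
  ultimately show ?thesis
    using mixture \<open>L \<noteq> {}\<close> \<open>U \<noteq> {}\<close> S(1,3)
    by (intro that[of "L \<times> U" w "t \<circ> fst" "t \<circ> snd"]) (auto simp: L_def U_def)
qed

lemma mixture_of_two_point_avgs: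
  fixes r t :: "'a \<Rightarrow> real"
  assumes S: "finite S" "\<And>x. x \<in> S \<Longrightarrow> 0 < r x" "\<And>x. x \<in> S \<Longrightarrow> 0 \<le> t x"
    and sums: "sum r S = 1" "(\<Sum>x\<in>S. r x * t x) = 1"
  obtains P :: "('a \<times> 'a) set" and w a b :: "'a \<times> 'a \<Rightarrow> real"
  where "finite P" "P \<noteq> {}" "\<And>k. k \<in> P \<Longrightarrow> 0 \<le> w k" "sum w P = 1"
    "\<And>k. k \<in> P \<Longrightarrow> 0 \<le> a k \<and> a k < 1 \<and> 1 \<le> b k"
    "\<And>g. (\<Sum>x\<in>S. r x * g (t x)) = (\<Sum>k\<in>P. w k * two_point_avg (a k) (b k) g)"
proof (cases "\<exists>x\<in>S. t x < 1")
  case True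
  then show ?thesis
    using mixture_of_two_point_avgs_if_ratio_below_1[OF S sums] that by blast
next
  case False
  have nonneg: "0 \<le> r x * (t x - 1)" if "x \<in> S" for x
    using False S(2)[OF that] that by (simp add: not_less)
  have "(\<Sum>x\<in>S. r x * (t x - 1)) = 0"
    using sums by (simp add: right_diff_distrib sum_subtractf)
  then have "\<forall>x\<in>S. r x * (t x - 1) = 0"
    by (simp only: sum_nonneg_eq_0_iff[OF S(1) nonneg])
  then have "t x = 1" if "x \<in> S" for x
    using S(2)[OF that] that by auto
  then have "(\<Sum>x\<in>S. r x * g (t x)) = sum r S * g 1" for g
    by (simp add: sum_distrib_right)
  then have "(\<Sum>x\<in>S. r x * g (t x)) = two_point_avg 0 1 g" for g
    using sums(1) by (simp add: two_point_avg_def)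
  then show ?thesis
    by (intro that[of "{(undefined, undefined)}" "\<lambda>_. 1" "\<lambda>_. 0" "\<lambda>_. 1"]) auto
qed

lemma fdiv_mixture_of_two_point_avgs:
  fixes p q :: "'a::finite \<Rightarrow> real"
  assumes dists: "is_dist p" "is_dist q" "abs_cont p q"
  obtains P :: "('a \<times> 'a) set" and w a b :: "'a \<times> 'a \<Rightarrow> real"
  where "finite P" "P \<noteq> {}" "\<And>k. k \<in> P \<Longrightarrow> 0 \<le> w k" "sum w P = 1"
    "\<And>k. k \<in> P \<Longrightarrow> 0 \<le> a k \<and> a k < 1 \<and> 1 \<le> b k"
    "\<And>g. fdiv g p q = (\<Sum>k\<in>P. w k * two_point_avg (a k) (b k) g)"
proof (rule mixture_of_two_point_avgs[of "{x. q x \<noteq> 0}" q "\<lambda>x. p x / q x"])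
  show "finite {x. q x \<noteq> 0}"
    by simp
  show "0 < q x" if "x \<in> {x. q x \<noteq> 0}" for x
    using dists(2) that by (auto simp: is_dist_def order_less_le)
  show "0 \<le> p x / q x" for x
    using dists(1,2) by (simp add: is_dist_def)
  show "sum q {x. q x \<noteq> 0} = 1" "(\<Sum>x | q x \<noteq> 0. q x * (p x / q x)) = 1"
    using is_dist_sum_support[OF dists] by simp_all
  fix P w and a b :: "'a \<times> 'a \<Rightarrow> real"
  assume P: "finite P" "P \<noteq> {}" "\<And>k. k \<in> P \<Longrightarrow> 0 \<le> w k" "sum w P = 1"
    "\<And>k. k \<in> P \<Longrightarrow> 0 \<le> a k \<and> a k < 1 \<and> 1 \<le> b k"
    and mixture: "\<And>g. (\<Sum>x | q x \<noteq> 0. q x * g (p x / q x)) = (\<Sum>k\<in>P. w k * two_point_avg (a k) (b k) g)"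
  have "fdiv g p q = (\<Sum>k\<in>P. w k * two_point_avg (a k) (b k) g)" for g
    unfolding fdiv_eq_sum_support by (rule mixture)
  with P show thesis
    by (rule that)
qed

lemma convex_nonneg_below_ereal: "convex {x::real. 0 \<le> x \<and> ereal x < \<nu>}"
proof (rule is_interval_convex, unfold is_interval_1, intro ballI allI impI)
  fix a b x :: real
  assume "a \<in> {x. 0 \<le> x \<and> ereal x < \<nu>}" "b \<in> {x. 0 \<le> x \<and> ereal x < \<nu>}" "a \<le> x \<and> x \<le> b"
  then show "x \<in> {x. 0 \<le> x \<and> ereal x < \<nu>}"
    using le_less_trans[of "ereal x" "ereal b" \<nu>] by simp
qed

lemma fdiv_le_concave_of_two_point_le:
  fixes p q :: "'a::finite \<Rightarrow> real"
  assumes H: "concave_on D H"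
    and two_point: "\<And>a b. 0 \<le> a \<Longrightarrow> a < 1 \<Longrightarrow> 1 \<le> b \<Longrightarrow>
      two_point_avg a b F \<in> D \<and> two_point_avg a b \<Phi> \<le> H (two_point_avg a b F)"
    and dists: "is_dist p" "is_dist q" "abs_cont p q"
  shows "fdiv \<Phi> p q \<le> H (fdiv F p q)"
proof (rule fdiv_mixture_of_two_point_avgs[OF dists])
  fix P w and a b :: "'a \<times> 'a \<Rightarrow> real"
  assume P: "finite P" "P \<noteq> {}" "\<And>k. k \<in> P \<Longrightarrow> 0 \<le> w k" "sum w P = 1"
    and ab: "\<And>k. k \<in> P \<Longrightarrow> 0 \<le> a k \<and> a k < 1 \<and> 1 \<le> b k"
    and mixture: "\<And>g. fdiv g p q = (\<Sum>k\<in>P. w k * two_point_avg (a k) (b k) g)"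
  have two_point_k: "two_point_avg (a k) (b k) F \<in> D"
    "two_point_avg (a k) (b k) \<Phi> \<le> H (two_point_avg (a k) (b k) F)" if "k \<in> P" for k
    using two_point ab[OF that] by blast+
  have "fdiv \<Phi> p q = (\<Sum>k\<in>P. w k * two_point_avg (a k) (b k) \<Phi>)"
    by (rule mixture)
  also have "\<dots> \<le> (\<Sum>k\<in>P. w k * H (two_point_avg (a k) (b k) F))"
    by (intro sum_mono mult_left_mono two_point_k P(3))
  also have "\<dots> \<le> H (\<Sum>k\<in>P. w k *\<^sub>R two_point_avg (a k) (b k) F)"
    by (rule concave_on_sum[OF P(1,2) H P(4) P(3) two_point_k(1)])
  also have "\<dots> = H (fdiv F p q)"
    by (simp add: mixture)
  finally show ?thesis .
qed

locale G_subadditivity =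
  fixes \<nu> :: ereal and G :: "real \<Rightarrow> real" and f :: "real \<Rightarrow> real"
  assumes nu_pos: "\<nu> > 0"
    and G_mono: "strict_mono_on {x. 0 \<le> x \<and> ereal x < \<nu>} G"
    and G0: "G 0 = 0"
    and G_range: "G ` {x. 0 \<le> x \<and> ereal x < \<nu>} = {0..}"
    and G_concave: "\<forall>c. 0 < c \<and> ereal c < \<nu> \<longrightarrow>
        concave_on {x. 0 \<le> x \<and> ereal x < \<nu>}
          (\<lambda>x. the_inv_into {x. 0 \<le> x \<and> ereal x < \<nu>} G (G x + G c))"
    and f_convex: "convex_on {0..} f"
    and f1: "f 1 = 0"
    and f_Dm: "Dm f \<le> \<nu>"
begin

abbreviation Dom :: "real set" where
  "Dom \<equiv> {x. 0 \<le> x \<and> ereal x < \<nu>}"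

lemma fdiv_in_Dom:
  fixes p q :: "'a::finite \<Rightarrow> real"
  assumes "is_dist p" "is_dist q" "abs_cont p q"
  shows "fdiv f p q \<in> Dom"
  using fdiv_nonneg[OF f_convex f1 assms] fdiv_less_if_Dm_le[OF f_convex f1 f_Dm nu_pos assms]
  by simp

lemma G_le_iff: "x \<in> Dom \<Longrightarrow> y \<in> Dom \<Longrightarrow> G x \<le> G y \<longleftrightarrow> x \<le> y"
  using strict_mono_on_leD[OF G_mono] strict_mono_onD[OF G_mono] by (meson linorder_not_le)

lemma fdiv_prod_dist_in_Dom:
  assumes "is_dist p" "is_dist r" "abs_cont p r" "is_dist q" "is_dist s" "abs_cont q s"
  shows "fdiv f (prod_dist p q) (prod_dist r s) \<in> Dom"
  using assms by (intro fdiv_in_Dom is_dist_prod_dist abs_cont_prod_dist)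

definition G_shift :: "real \<Rightarrow> real \<Rightarrow> real" where
  "G_shift c x = the_inv_into Dom G (G x + G c)"

lemma G_shift:
  assumes "x \<in> Dom" "c \<in> Dom"
  shows "G_shift c x \<in> Dom" "G (G_shift c x) = G x + G c"
proof -
  have "G x \<in> {0..}" "G c \<in> {0..}"
    using G_range assms by blast+
  then have image: "G x + G c \<in> G ` Dom"
    using G_range by simp
  note inj = strict_mono_on_imp_inj_on[OF G_mono]
  show "G_shift c x \<in> Dom"
    unfolding G_shift_def by (rule the_inv_into_into[OF inj image subset_refl])
  show "G (G_shift c x) = G x + G c"
    unfolding G_shift_def by (rule f_the_inv_into_f[OF inj image])
qed

lemma concave_on_G_shift:
  assumes "c \<in> Dom"
  shows "concave_on Dom (G_shift c)"
proof (cases "c = 0")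
  case True
  have "G_shift c x = x" if "x \<in> Dom" for x
    using True G0 the_inv_into_f_f[OF strict_mono_on_imp_inj_on[OF G_mono] that]
    by (simp add: G_shift_def)
  then show ?thesis
    using convex_nonneg_below_ereal[of \<nu>] unfolding concave_on_iff by (auto simp: convex_def)
next
  case False
  then show ?thesis
    using G_concave assms unfolding G_shift_def by auto
qed

lemma two_point_bound_of_binary:
  fixes qZ rZ :: "'z::finite \<Rightarrow> real"
  assumes binary: "\<And>qY' rY' :: bool \<Rightarrow> real. is_dist qY' \<Longrightarrow> is_dist rY' \<Longrightarrow> abs_cont qY' rY' \<Longrightarrow>
      G (fdiv f (prod_dist qY' qZ) (prod_dist rY' rZ)) \<le> G (fdiv f qY' rY') + G (fdiv f qZ rZ)"
    and dZ: "is_dist qZ" "is_dist rZ" "abs_cont qZ rZ"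
    and ab: "0 \<le> a" "a < 1" "1 \<le> b"
  shows "two_point_avg a b f \<in> Dom \<and>
    two_point_avg a b (\<lambda>u. fdiv (\<lambda>v. f (u * v)) qZ rZ) \<le> G_shift (fdiv f qZ rZ) (two_point_avg a b f)"
proof -
  obtain p r :: "bool \<Rightarrow> real" where d: "is_dist p" "is_dist r" "abs_cont p r"
    and avg: "\<And>g. fdiv g p r = two_point_avg a b g"
    using two_point_avg_as_fdiv[OF ab] by blast
  let ?x = "two_point_avg a b f" and ?y = "two_point_avg a b (\<lambda>u. fdiv (\<lambda>v. f (u * v)) qZ rZ)"
    and ?c = "fdiv f qZ rZ"
  have prod: "fdiv f (prod_dist p qZ) (prod_dist r rZ) = ?y"
    by (simp add: fdiv_prod_dist avg)
  have x: "?x \<in> Dom" and y: "?y \<in> Dom" and c: "?c \<in> Dom"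
    using fdiv_in_Dom[OF d] fdiv_prod_dist_in_Dom[OF d dZ] fdiv_in_Dom[OF dZ] by (simp_all add: avg prod)
  have "G ?y \<le> G (G_shift ?c ?x)"
    using binary[OF d] G_shift(2)[OF x c] by (simp add: avg prod)
  then show ?thesis
    using x G_le_iff[OF y G_shift(1)[OF x c]] by simp
qed

lemma G_subadditive_of_binary_left:
  fixes qY rY :: "'y::finite \<Rightarrow> real" and qZ rZ :: "'z::finite \<Rightarrow> real"
  assumes binary: "\<And>qY' rY' :: bool \<Rightarrow> real. is_dist qY' \<Longrightarrow> is_dist rY' \<Longrightarrow> abs_cont qY' rY' \<Longrightarrow>
      G (fdiv f (prod_dist qY' qZ) (prod_dist rY' rZ)) \<le> G (fdiv f qY' rY') + G (fdiv f qZ rZ)"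
    and dY: "is_dist qY" "is_dist rY" "abs_cont qY rY"
    and dZ: "is_dist qZ" "is_dist rZ" "abs_cont qZ rZ"
  shows "G (fdiv f (prod_dist qY qZ) (prod_dist rY rZ)) \<le> G (fdiv f qY rY) + G (fdiv f qZ rZ)"
proof -
  let ?c = "fdiv f qZ rZ"
  have c: "?c \<in> Dom" and Y: "fdiv f qY rY \<in> Dom"
    using fdiv_in_Dom dZ dY by blast+
  have "fdiv f (prod_dist qY qZ) (prod_dist rY rZ) \<le> G_shift ?c (fdiv f qY rY)"
    unfolding fdiv_prod_dist
    by (rule fdiv_le_concave_of_two_point_le[OF concave_on_G_shift[OF c] _ dY])
      (rule two_point_bound_of_binary[OF binary dZ])
  then have "G (fdiv f (prod_dist qY qZ) (prod_dist rY rZ)) \<le> G (G_shift ?c (fdiv f qY rY))"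
    using G_le_iff G_shift(1)[OF Y c] fdiv_prod_dist_in_Dom[OF dY dZ] by simp
  also have "\<dots> = G (fdiv f qY rY) + G ?c"
    by (rule G_shift(2)[OF Y c])
  finally show ?thesis .
qed

end

theorem lemma5:
  fixes \<nu> :: ereal and G :: "real \<Rightarrow> real" and f :: "real \<Rightarrow> real"
    and qY rY :: "'y::finite \<Rightarrow> real" and qZ rZ :: "'z::finite \<Rightarrow> real"
  assumes nu_pos: "\<nu> > 0"
    and G_mono: "strict_mono_on {x. 0 \<le> x \<and> ereal x < \<nu>} G"
    and G0: "G 0 = 0"
    and G_range: "G ` {x. 0 \<le> x \<and> ereal x < \<nu>} = {0..}"
    and G_concave: "\<forall>c. 0 < c \<and> ereal c < \<nu> \<longrightarrow>
        concave_on {x. 0 \<le> x \<and> ereal x < \<nu>}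
          (\<lambda>x. the_inv_into {x. 0 \<le> x \<and> ereal x < \<nu>} G (G x + G c))"
    and f_convex: "convex_on {0..} f"
    and f1: "f 1 = 0"
    and f_Dm: "Dm f \<le> \<nu>"
    and binary: "\<forall>(qY' :: bool \<Rightarrow> real) (rY' :: bool \<Rightarrow> real)
        (qZ' :: bool \<Rightarrow> real) (rZ' :: bool \<Rightarrow> real).
        is_dist qY' \<and> is_dist rY' \<and> is_dist qZ' \<and> is_dist rZ' \<and>
        abs_cont qY' rY' \<and> abs_cont qZ' rZ' \<longrightarrow>
        G (fdiv f (prod_dist qY' qZ') (prod_dist rY' rZ'))
          \<le> G (fdiv f qY' rY') + G (fdiv f qZ' rZ')"
    and dists: "is_dist qY" "is_dist rY" "is_dist qZ" "is_dist rZ"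
    and ac: "abs_cont qY rY" "abs_cont qZ rZ"
  shows "G (fdiv f (prod_dist qY qZ) (prod_dist rY rZ))
           \<le> G (fdiv f qY rY) + G (fdiv f qZ rZ)"
proof -
  interpret G_subadditivity \<nu> G f
    using nu_pos G_mono G0 G_range G_concave f_convex f1 f_Dm by unfold_locales
  have binary_Y: "G (fdiv f (prod_dist qY' qZ) (prod_dist rY' rZ)) \<le> G (fdiv f qY' rY') + G (fdiv f qZ rZ)"
    if dY': "is_dist qY'" "is_dist rY'" "abs_cont qY' rY'" for qY' rY' :: "bool \<Rightarrow> real"
  proof -
    have "G (fdiv f (prod_dist qZ qY') (prod_dist rZ rY')) \<le> G (fdiv f qZ rZ) + G (fdiv f qY' rY')"
    proof (rule G_subadditive_of_binary_left[OF _ dists(3,4) ac(2) dY'])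
      fix qZ' rZ' :: "bool \<Rightarrow> real"
      assume "is_dist qZ'" "is_dist rZ'" "abs_cont qZ' rZ'"
      then show "G (fdiv f (prod_dist qZ' qY') (prod_dist rZ' rY')) \<le> G (fdiv f qZ' rZ') + G (fdiv f qY' rY')"
        using binary dY' by (simp add: fdiv_prod_dist_commute[of f qZ'] add.commute)
    qed
    then show ?thesis
      by (simp add: fdiv_prod_dist_commute[of f qZ] add.commute)
  qed
  show ?thesis
    by (rule G_subadditive_of_binary_left[OF binary_Y dists(1,2) ac(1) dists(3,4) ac(2)])
qed

end
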